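(* Assume the setting described in the context and suppose the event $\mathcal{E}$ holds. Let $\gamma\in(0,1)$, let $S\subseteq[n]$ with $|S|=k$ and $\|\mathbf{v}_S\|_2\ge\sqrt\gamma$, and let $\mathbf{w}^{(0)}$ be a unit eigenvector for the largest eigenvalue of $\hat{\boldsymbol{\Gamma}}_{S,S}$, zero-padded to $\mathbb{R}^n$. Then there is an absolute constant $C_1>0$ such that $$ \alpha_0:=|\langle\mathbf{w}^{(0)},\mathbf{v}\rangle|\ \ge\ \sqrt\gamma\sqrt{\Big(1-\frac{C_1(1+\theta)^2}{\theta^2\gamma^2}\cdot\frac{k\log n}{m}\Big)_+}, $$ where $(x)_+=\max\{x,0\}$. In particular, there are absolute constants $C>0$ and $c_0\in(0,1/2]$ such that if $m\ge C\frac{(1+\theta)^2}{\theta^2\gamma^2}k\log n$, then $\alpha_0\ge c_0\gamma$.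
   Context: Let $n\ge 2$, $m\ge1$, $\theta>0$, $k\in[n]$; $\mathbf{v}\in\mathbb{R}^n$ a unit vector with at most $k$ nonzero entries; $\mathbf{x}_1,\dots,\mathbf{x}_m$ i.i.d. $\mathcal{N}(\mathbf{0},\mathbf{I}_n+\theta\mathbf{v}\mathbf{v}^\top)$; $\hat{\boldsymbol{\Gamma}}=\frac1m\sum_i\mathbf{x}_i\mathbf{x}_i^\top-\mathbf{I}_n$; $\mathbf{W}=\hat{\boldsymbol{\Gamma}}-\theta\mathbf{v}\mathbf{v}^\top$. $\mathbf{v}_S$ is the restriction of $\mathbf{v}$ to $S$, $\hat{\boldsymbol{\Gamma}}_{S,S}$ a principal submatrix, $\|\cdot\|_2$ Euclidean/spectral norm. Fix an absolute constant $C_0>0$; $\mathcal{E}$ is the event that $\|\mathbf{W}_{S,S}\|_2\le C_0(1+\theta)\sqrt{|S|\log n/m}$ for all nonempty $S\subseteq[n]$. (In the paper, $S$ is the final support $S^{(k)}$ of the SEP algorithm and $\mathbf{w}^{(0)}$ its output.) Absolute constants do not depend on $n,m,k,\theta,\mathbf{v},\gamma$. *)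

theory Defs
  imports "HOL-Analysis.Analysis"
begin

text \<open>Vectors in R^n are functions nat => real (index set [n] = {0..<n});
  n x n matrices are functions nat => nat => real.\<close>

definition sub_opnorm :: "nat set \<Rightarrow> (nat \<Rightarrow> nat \<Rightarrow> real) \<Rightarrow> real" where
  "sub_opnorm S A =
     (SUP u \<in> {u :: nat \<Rightarrow> real. (\<Sum>j\<in>S. (u j)^2) \<le> 1}.
        sqrt (\<Sum>i\<in>S. (\<Sum>j\<in>S. A i j * u j)^2))"

definition Gamma_hat :: "nat \<Rightarrow> (nat \<Rightarrow> nat \<Rightarrow> real) \<Rightarrow> nat \<Rightarrow> nat \<Rightarrow> real" where
  "Gamma_hat m x i j = (\<Sum>l<m. x l i * x l j) / real m - (if i = j then 1 else 0)"

definition top_eigvec_sub :: "nat set \<Rightarrow> (nat \<Rightarrow> nat \<Rightarrow> real) \<Rightarrow> (nat \<Rightarrow> real) \<Rightarrow> bool" where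
  "top_eigvec_sub S A w \<longleftrightarrow>
     (\<forall>i. i \<notin> S \<longrightarrow> w i = 0) \<and> (\<Sum>i\<in>S. (w i)^2) = 1 \<and>
     (\<exists>lam. (\<forall>i\<in>S. (\<Sum>j\<in>S. A i j * w j) = lam * w i) \<and>
        (\<forall>mu u. (\<exists>i\<in>S. u i \<noteq> 0) \<and> (\<forall>i\<in>S. (\<Sum>j\<in>S. A i j * u j) = mu * u i)
                 \<longrightarrow> mu \<le> lam))"

end

(*
  Write Gamma_hat on S as W + theta v v^T, where the event gives ||W_{S,S}|| <= eps with
  eps = C0 (1 + theta) sqrt (k log n / m), and put s = |v_S|^2 >= gamma, beta = <w, v>.
  The top eigenvalue lambda of Gamma_hat_{S,S} is the maximum of the Rayleigh quotient, so testing
  it with v_S gives lambda >= theta s - eps. Writing w = (beta / s) v_S + r with r orthogonal to v_S,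
  the eigenvalue equation gives <r, W w> = lambda |r|^2, hence lambda^2 |r|^2 <= eps^2. If
  2 eps < theta gamma this yields |r|^2 <= 4 eps^2 / (theta^2 s^2), and therefore
  beta^2 = s (1 - |r|^2) >= s - 4 eps^2 / (theta^2 s) >= gamma - 4 eps^2 / (theta^2 gamma),
  which is the claim with C1 = 4 C0^2. With C = 8 C0^2 the bracket is at least 1/2, so
  alpha_0 >= gamma / 2.
*)

theory Submission
  imports Defs
begin

definition sub_inner :: "nat set \<Rightarrow> (nat \<Rightarrow> real) \<Rightarrow> (nat \<Rightarrow> real) \<Rightarrow> real" where
  "sub_inner S x y = (\<Sum>i\<in>S. x i * y i)"

definition sub_mult_vec :: "nat set \<Rightarrow> (nat \<Rightarrow> nat \<Rightarrow> real) \<Rightarrow> (nat \<Rightarrow> real) \<Rightarrow> nat \<Rightarrow> real" where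
  "sub_mult_vec S A y i = (\<Sum>j\<in>S. A i j * y j)"

lemma sub_inner_commute: "sub_inner S x y = sub_inner S y x"
  unfolding sub_inner_def by (simp add: mult.commute)

lemma sub_inner_self_nonneg: "0 \<le> sub_inner S x x"
  unfolding sub_inner_def by (simp add: sum_nonneg)

lemma sub_inner_self_eq_0_iff:
  "finite S \<Longrightarrow> sub_inner S x x = 0 \<longleftrightarrow> (\<forall>i\<in>S. x i = 0)"
  unfolding sub_inner_def by (simp add: sum_nonneg_eq_0_iff)

lemma sub_inner_cong:
  "(\<And>i. i \<in> S \<Longrightarrow> x i = x' i) \<Longrightarrow> (\<And>i. i \<in> S \<Longrightarrow> y i = y' i) \<Longrightarrow>
   sub_inner S x y = sub_inner S x' y'"
  unfolding sub_inner_def by (intro sum.cong) auto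

lemma sub_inner_diff_scale_left:
  "sub_inner S (\<lambda>i. x i - a * y i) z = sub_inner S x z - a * sub_inner S y z"
  unfolding sub_inner_def by (simp add: algebra_simps sum_subtractf sum_distrib_left)

lemma sub_inner_diff_scale_right:
  "sub_inner S z (\<lambda>i. x i - a * y i) = sub_inner S z x - a * sub_inner S z y"
  unfolding sub_inner_def by (simp add: algebra_simps sum_subtractf sum_distrib_left)

lemma sub_inner_scale:
  "sub_inner S (\<lambda>i. a * x i) (\<lambda>i. b * y i) = a * b * sub_inner S x y"
  unfolding sub_inner_def by (simp add: algebra_simps sum_distrib_left)

lemma sub_mult_vec_add_scale:
  "sub_mult_vec S A (\<lambda>j. x j + a * y j) i = sub_mult_vec S A x i + a * sub_mult_vec S A y i"
  unfolding sub_mult_vec_def by (simp add: algebra_simps sum.distrib sum_distrib_left)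

lemma sub_mult_vec_scale:
  "sub_mult_vec S A (\<lambda>j. a * y j) i = a * sub_mult_vec S A y i"
  unfolding sub_mult_vec_def by (simp add: algebra_simps sum_distrib_left)

lemma sub_inner_Cauchy_Schwarz: "(sub_inner S x y)^2 \<le> sub_inner S x x * sub_inner S y y"
  unfolding sub_inner_def power2_eq_square[symmetric] by (rule Cauchy_Schwarz_ineq_sum)

lemma sub_inner_mult_vec_symmetric:
  assumes "\<forall>i\<in>S. \<forall>j\<in>S. A i j = A j i"
  shows "sub_inner S x (sub_mult_vec S A y) = sub_inner S (sub_mult_vec S A x) y"
proof -
  have "sub_inner S x (sub_mult_vec S A y) = (\<Sum>i\<in>S. \<Sum>j\<in>S. x i * A i j * y j)"
    unfolding sub_inner_def sub_mult_vec_def by (simp add: sum_distrib_left mult.assoc)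
  also have "\<dots> = (\<Sum>j\<in>S. \<Sum>i\<in>S. x i * A j i * y j)"
    using assms by (subst sum.swap) (intro sum.cong refl, simp)
  also have "\<dots> = sub_inner S (sub_mult_vec S A x) y"
    unfolding sub_inner_def sub_mult_vec_def by (simp add: sum_distrib_left sum_distrib_right mult_ac)
  finally show ?thesis .
qed

lemma sub_opnorm_upper:
  assumes "sub_inner S y y \<le> 1"
  shows "sqrt (sub_inner S (sub_mult_vec S A y) (sub_mult_vec S A y)) \<le> sub_opnorm S A"
proof -
  let ?B = "{u. (\<Sum>j\<in>S. (u j)^2) \<le> 1}"
  have "(\<Sum>j\<in>S. A i j * u j)^2 \<le> (\<Sum>j\<in>S. (A i j)^2)" if "u \<in> ?B" for u i
  proof -
    have "(\<Sum>j\<in>S. A i j * u j)^2 \<le> (\<Sum>j\<in>S. (A i j)^2) * (\<Sum>j\<in>S. (u j)^2)"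
      by (rule Cauchy_Schwarz_ineq_sum)
    also have "\<dots> \<le> (\<Sum>j\<in>S. (A i j)^2)"
      using that by (intro mult_left_le) (auto intro: sum_nonneg)
    finally show ?thesis .
  qed
  then have "bdd_above ((\<lambda>u. sqrt (\<Sum>i\<in>S. (\<Sum>j\<in>S. A i j * u j)^2)) ` ?B)"
    by (intro bdd_aboveI2[where M = "sqrt (\<Sum>i\<in>S. \<Sum>j\<in>S. (A i j)^2)"]) (auto intro: sum_mono)
  moreover have "y \<in> ?B"
    using assms by (simp add: sub_inner_def power2_eq_square)
  ultimately show ?thesis
    unfolding sub_opnorm_def by (auto simp: sub_inner_def sub_mult_vec_def power2_eq_square intro: cSUP_upper2)
qed

lemma sub_inner_normalize:
  assumes "sub_inner S y y > 0"
  shows "sub_inner S (\<lambda>i. (1 / sqrt (sub_inner S y y)) * y i) (\<lambda>i. (1 / sqrt (sub_inner S y y)) * y i) = 1"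
  using assms unfolding sub_inner_scale by simp

lemma sub_mult_vec_norm_le_opnorm:
  assumes "finite S"
  shows "sub_inner S (sub_mult_vec S A y) (sub_mult_vec S A y) \<le> (sub_opnorm S A)^2 * sub_inner S y y"
proof (cases "sub_inner S y y = 0")
  case True
  then have "sub_mult_vec S A y = (\<lambda>i. 0)"
    using assms by (auto simp: sub_inner_self_eq_0_iff sub_mult_vec_def)
  then show ?thesis
    using True by (simp add: sub_inner_def)
next
  case False
  define c where "c = 1 / sqrt (sub_inner S y y)"
  have "sub_inner S (\<lambda>i. c * y i) (\<lambda>i. c * y i) = 1"
    using False sub_inner_self_nonneg[of S y] unfolding c_def by (intro sub_inner_normalize) simp
  then have "sqrt (sub_inner S (sub_mult_vec S A (\<lambda>i. c * y i)) (sub_mult_vec S A (\<lambda>i. c * y i)))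
      \<le> sub_opnorm S A"
    by (rule sub_opnorm_upper[OF eq_refl])
  moreover have "sub_mult_vec S A (\<lambda>i. c * y i) = (\<lambda>i. c * sub_mult_vec S A y i)"
    using sub_mult_vec_scale by blast
  ultimately have "c * c * sub_inner S (sub_mult_vec S A y) (sub_mult_vec S A y) \<le> (sub_opnorm S A)^2"
    by (metis sqrt_le_D sub_inner_scale)
  then show ?thesis
    using False sub_inner_self_nonneg[of S y] unfolding c_def by (simp add: field_simps)
qed

lemma sub_bilinear_le_opnorm:
  assumes "finite S"
  shows "(sub_inner S x (sub_mult_vec S A y))^2 \<le> sub_inner S x x * ((sub_opnorm S A)^2 * sub_inner S y y)"
  using sub_inner_Cauchy_Schwarz[of S x "sub_mult_vec S A y"] sub_mult_vec_norm_le_opnorm[OF assms, of A y]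
    sub_inner_self_nonneg[of S x] by (meson mult_left_mono order_trans)

lemma linear_coeff_eq_0_if_nonneg:
  fixes a b :: real
  assumes "\<forall>t. 0 \<le> t * a + t^2 * b"
  shows "a = 0"
proof (rule ccontr)
  assume "a \<noteq> 0"
  define c where "c = \<bar>b\<bar> + 1"
  define t where "t = - a / c"
  have c: "c > 0" "\<bar>b\<bar> < c" unfolding c_def by auto
  have "t^2 * b \<le> t^2 * \<bar>b\<bar>" by (simp add: mult_left_mono)
  also have "\<dots> < t^2 * c"
    using c \<open>a \<noteq> 0\<close> unfolding t_def by (intro mult_strict_left_mono) auto
  also have "\<dots> = - (t * a)"
    using c unfolding t_def by (simp add: power2_eq_square field_simps)
  finally show False
    using assms[rule_format, of t] by linarith
qed

lemma rayleigh_maximizer_eigenvector: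
  assumes "finite S" and sym: "\<forall>i\<in>S. \<forall>j\<in>S. A i j = A j i"
    and le: "\<forall>y. sub_inner S y (sub_mult_vec S A y) \<le> \<mu> * sub_inner S y y"
    and eq: "sub_inner S z (sub_mult_vec S A z) = \<mu> * sub_inner S z z"
  shows "\<forall>i\<in>S. sub_mult_vec S A z i = \<mu> * z i"
proof -
  define q where "q y = \<mu> * sub_inner S y y - sub_inner S y (sub_mult_vec S A y)" for y
  define r where "r i = \<mu> * z i - sub_mult_vec S A z i" for i
  have expand: "q (\<lambda>i. z i + t * r i) = q z + t * (2 * sub_inner S r r) + t^2 * q r" for t
  proof -
    have Az: "sub_mult_vec S A (\<lambda>i. z i + t * r i) = (\<lambda>i. sub_mult_vec S A z i + t * sub_mult_vec S A r i)"
      using sub_mult_vec_add_scale by blast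
    have zz: "sub_inner S (\<lambda>i. z i + t * r i) (\<lambda>i. z i + t * r i)
        = sub_inner S z z + 2 * t * sub_inner S r z + t^2 * sub_inner S r r"
      unfolding sub_inner_def by (simp add: algebra_simps sum.distrib sum_distrib_left power2_eq_square)
    have zAz: "sub_inner S (\<lambda>i. z i + t * r i) (\<lambda>i. sub_mult_vec S A z i + t * sub_mult_vec S A r i)
        = sub_inner S z (sub_mult_vec S A z) + t * sub_inner S z (sub_mult_vec S A r)
          + t * sub_inner S r (sub_mult_vec S A z) + t^2 * sub_inner S r (sub_mult_vec S A r)"
      unfolding sub_inner_def by (simp add: algebra_simps sum.distrib sum_distrib_left power2_eq_square)
    have sym_zr: "sub_inner S z (sub_mult_vec S A r) = sub_inner S r (sub_mult_vec S A z)"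
      using sub_inner_mult_vec_symmetric[OF sym, of z r] sub_inner_commute[of S "sub_mult_vec S A z" r] by simp
    have rr: "sub_inner S r r = \<mu> * sub_inner S r z - sub_inner S r (sub_mult_vec S A z)"
      unfolding r_def sub_inner_def by (simp add: algebra_simps sum_subtractf sum.distrib sum_distrib_left)
    show ?thesis
      unfolding q_def Az zz zAz sym_zr rr by (simp add: algebra_simps)
  qed
  have "q z = 0" "\<forall>y. 0 \<le> q y"
    using eq le unfolding q_def by auto
  then have "\<forall>t. 0 \<le> t * (2 * sub_inner S r r) + t^2 * q r"
    using expand by (metis add_0)
  then have "sub_inner S r r = 0"
    using linear_coeff_eq_0_if_nonneg[of "2 * sub_inner S r r" "q r"] by simp
  then show ?thesis
    using \<open>finite S\<close> unfolding r_def by (simp add: sub_inner_self_eq_0_iff)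
qed

lemma compact_PiE_unit_cube: "compact (PiE UNIV (\<lambda>i. if i \<in> S then {-1..1::real} else {0}))"
proof -
  have "compactin (product_topology (\<lambda>_. euclidean) UNIV) (PiE UNIV (\<lambda>i. if i \<in> S then {-1..1::real} else {0}))"
    unfolding compactin_PiE by auto
  then show ?thesis by (simp add: euclidean_product_topology)
qed

(* The unit sphere of R^S, made compact in nat => real by freezing the coordinates outside S. *)
lemma rayleigh_maximum_exists:
  assumes "finite S" and "S \<noteq> {}"
  shows "\<exists>z. sub_inner S z z = 1 \<and>
           (\<forall>y. sub_inner S y (sub_mult_vec S A y) \<le> sub_inner S z (sub_mult_vec S A z) * sub_inner S y y)"
proof -
  define K where "K = PiE UNIV (\<lambda>i. if i \<in> S then {-1..1::real} else {0}) \<inter> {u. sub_inner S u u = 1}"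
  have "compact K"
    unfolding K_def sub_inner_def
    by (intro compact_Int_closed compact_PiE_unit_cube closed_Collect_eq continuous_intros continuous_on_product_coordinates)
  moreover obtain i0 where "i0 \<in> S" using assms(2) by auto
  then have "(\<lambda>i. if i = i0 then 1 else 0) \<in> K"
    unfolding K_def sub_inner_def using assms(1) by (auto simp: if_distrib cong: if_cong)
  moreover have "continuous_on K (\<lambda>u. sub_inner S u (sub_mult_vec S A u))"
    unfolding sub_inner_def sub_mult_vec_def
    by (intro continuous_intros continuous_on_product_coordinates continuous_on_subset[OF _ subset_UNIV])
  ultimately obtain z where "z \<in> K" and z_max: "\<forall>u\<in>K. sub_inner S u (sub_mult_vec S A u) \<le> sub_inner S z (sub_mult_vec S A z)"
    using continuous_attains_sup[of K] by blast
  have "sub_inner S y (sub_mult_vec S A y) \<le> sub_inner S z (sub_mult_vec S A z) * sub_inner S y y" for y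
  proof (cases "sub_inner S y y = 0")
    case True
    then show ?thesis
      using assms(1) by (simp add: sub_inner_self_eq_0_iff) (simp add: sub_inner_def)
  next
    case False
    define c where "c = 1 / sqrt (sub_inner S y y)"
    define u where "u i = (if i \<in> S then c * y i else 0)" for i
    have "sub_inner S (\<lambda>i. c * y i) (\<lambda>i. c * y i) = 1"
      using False sub_inner_self_nonneg[of S y] unfolding c_def by (intro sub_inner_normalize) simp
    then have "sub_inner S u u = 1"
      by (subst sub_inner_cong[of S u "\<lambda>i. c * y i"]) (auto simp: u_def)
    moreover have "\<bar>u i\<bar> \<le> 1" if "i \<in> S" for i
    proof -
      have "(u i)^2 \<le> sub_inner S u u"
        unfolding sub_inner_def power2_eq_square[symmetric] using assms(1) that by (intro member_le_sum) auto
      then show ?thesis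
        using \<open>sub_inner S u u = 1\<close> by (simp add: abs_square_le_1)
    qed
    ultimately have "u \<in> K"
      unfolding K_def by (auto simp: PiE_iff u_def abs_le_iff)
    then have "sub_inner S u (sub_mult_vec S A u) \<le> sub_inner S z (sub_mult_vec S A z)"
      using z_max by blast
    moreover have "sub_inner S u (sub_mult_vec S A u) = c * c * sub_inner S y (sub_mult_vec S A y)"
    proof -
      have "sub_mult_vec S A u = (\<lambda>i. c * sub_mult_vec S A y i)"
        unfolding sub_mult_vec_def u_def by (auto simp: sum_distrib_left mult_ac intro: sum.cong)
      then show ?thesis
        unfolding sub_inner_scale[symmetric] by (intro sub_inner_cong) (auto simp: u_def)
    qed
    ultimately show ?thesis
      using False sub_inner_self_nonneg[of S y] unfolding c_def by (simp add: field_simps)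
  qed
  then show ?thesis
    using \<open>z \<in> K\<close> unfolding K_def by blast
qed

(* top_eigvec_sub only compares the eigenvalue of w with other eigenvalues; the Rayleigh bound
   needs an eigenvector attaining the maximum of the Rayleigh quotient. *)
lemma top_eigvec_sub_rayleigh:
  assumes "finite S" and "\<forall>i\<in>S. \<forall>j\<in>S. A i j = A j i" and "top_eigvec_sub S A w"
  obtains lam where "sub_inner S w w = 1" and "\<forall>i\<in>S. sub_mult_vec S A w i = lam * w i"
    and "\<forall>y. sub_inner S y (sub_mult_vec S A y) \<le> lam * sub_inner S y y"
proof -
  obtain lam where w_unit: "sub_inner S w w = 1" and w_eig: "\<forall>i\<in>S. sub_mult_vec S A w i = lam * w i"
    and w_top: "\<forall>\<mu> u. (\<exists>i\<in>S. u i \<noteq> 0) \<and> (\<forall>i\<in>S. sub_mult_vec S A u i = \<mu> * u i) \<longrightarrow> \<mu> \<le> lam"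
    using assms(3) unfolding top_eigvec_sub_def sub_inner_def sub_mult_vec_def power2_eq_square by blast
  have "S \<noteq> {}"
    using w_unit by (auto simp: sub_inner_def)
  then obtain z where z_unit: "sub_inner S z z = 1"
    and z_max: "\<forall>y. sub_inner S y (sub_mult_vec S A y) \<le> sub_inner S z (sub_mult_vec S A z) * sub_inner S y y"
    using rayleigh_maximum_exists[OF assms(1)] by blast
  have "\<exists>i\<in>S. z i \<noteq> 0"
    using z_unit assms(1) sub_inner_self_eq_0_iff[of S z] by auto
  moreover have "\<forall>i\<in>S. sub_mult_vec S A z i = sub_inner S z (sub_mult_vec S A z) * z i"
    using z_unit z_max by (intro rayleigh_maximizer_eigenvector[OF assms(1,2)]) auto
  ultimately have "sub_inner S z (sub_mult_vec S A z) \<le> lam"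
    using w_top by blast
  then have "\<forall>y. sub_inner S y (sub_mult_vec S A y) \<le> lam * sub_inner S y y"
    using z_max sub_inner_self_nonneg by (meson mult_right_mono order_trans)
  then show ?thesis
    using that w_unit w_eig by blast
qed

lemma sub_opnorm_nonneg: "0 \<le> sub_opnorm S A"
proof -
  have "sqrt (sub_inner S (sub_mult_vec S A (\<lambda>_. 0)) (sub_mult_vec S A (\<lambda>_. 0))) \<le> sub_opnorm S A"
    by (rule sub_opnorm_upper) (simp add: sub_inner_def)
  then show ?thesis
    using real_sqrt_ge_zero[OF sub_inner_self_nonneg] by (rule order_trans[rotated])
qed

lemma sub_mult_vec_spike:
  assumes "\<forall>i\<in>S. \<forall>j\<in>S. A i j = W i j + \<theta> * v i * v j" and "i \<in> S"
  shows "sub_mult_vec S A y i = sub_mult_vec S W y i + \<theta> * sub_inner S v y * v i"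
  using assms unfolding sub_mult_vec_def sub_inner_def
  by (simp add: algebra_simps sum.distrib sum_distrib_left sum_distrib_right)

lemma spiked_rayleigh_lower:
  assumes "finite S" and spike: "\<forall>i\<in>S. \<forall>j\<in>S. A i j = W i j + \<theta> * v i * v j"
    and "sub_opnorm S W \<le> \<epsilon>"
    and rayleigh: "\<forall>y. sub_inner S y (sub_mult_vec S A y) \<le> lam * sub_inner S y y"
  shows "\<theta> * (sub_inner S v v)^2 - \<epsilon> * sub_inner S v v \<le> lam * sub_inner S v v"
proof -
  define s where "s = sub_inner S v v"
  have "s \<ge> 0" "\<epsilon> \<ge> 0"
    using sub_inner_self_nonneg sub_opnorm_nonneg[of S W] assms(3) unfolding s_def by (auto intro: order_trans)
  have "(sub_inner S v (sub_mult_vec S W v))^2 \<le> s * ((sub_opnorm S W)^2 * s)"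
    unfolding s_def by (rule sub_bilinear_le_opnorm[OF assms(1)])
  also have "\<dots> = (sub_opnorm S W * s)^2"
    by (simp add: power2_eq_square)
  also have "\<dots> \<le> (\<epsilon> * s)^2"
    using \<open>s \<ge> 0\<close> assms(3) sub_opnorm_nonneg[of S W] by (intro power_mono mult_right_mono) auto
  finally have "\<bar>sub_inner S v (sub_mult_vec S W v)\<bar> \<le> \<epsilon> * s"
    using \<open>s \<ge> 0\<close> \<open>\<epsilon> \<ge> 0\<close> by (simp add: abs_le_square_iff[symmetric])
  have "sub_inner S v (sub_mult_vec S A v) = sub_inner S v (\<lambda>i. sub_mult_vec S W v i + \<theta> * s * v i)"
    unfolding s_def by (intro sub_inner_cong) (simp_all add: sub_mult_vec_spike[OF spike])
  then have "sub_inner S v (sub_mult_vec S A v) = sub_inner S v (sub_mult_vec S W v) + \<theta> * s^2"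
    unfolding s_def sub_inner_def by (simp add: algebra_simps sum.distrib sum_distrib_left power2_eq_square)
  with \<open>\<bar>sub_inner S v (sub_mult_vec S W v)\<bar> \<le> \<epsilon> * s\<close> show ?thesis
    using rayleigh[rule_format, of v] unfolding s_def by linarith
qed

lemma spiked_eigvec_residual:
  assumes "finite S" and spike: "\<forall>i\<in>S. \<forall>j\<in>S. A i j = W i j + \<theta> * v i * v j"
    and "sub_opnorm S W \<le> \<epsilon>" and w_unit: "sub_inner S w w = 1"
    and w_eig: "\<forall>i\<in>S. sub_mult_vec S A w i = lam * w i" and "sub_inner S v v > 0"
  shows "lam^2 * (1 - (sub_inner S w v)^2 / sub_inner S v v) \<le> \<epsilon>^2"
proof -
  define s where "s = sub_inner S v v"
  define \<beta> where "\<beta> = sub_inner S w v"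
  define r where "r i = w i - (\<beta> / s) * v i" for i
  define R where "R = sub_inner S r r"
  have "s > 0" using assms(6) unfolding s_def .
  have rv: "sub_inner S r v = 0"
    using \<open>s > 0\<close> unfolding r_def sub_inner_diff_scale_left \<beta>_def s_def by simp
  have rw: "sub_inner S r w = 1 - \<beta>^2 / s"
    using w_unit sub_inner_commute[of S v w]
    unfolding r_def sub_inner_diff_scale_left \<beta>_def by (simp add: power2_eq_square)
  have R: "R = 1 - \<beta>^2 / s"
    using rv rw unfolding R_def r_def[abs_def] sub_inner_diff_scale_right by simp
  have "sub_inner S r (sub_mult_vec S W w) = sub_inner S r (\<lambda>i. lam * w i - \<theta> * \<beta> * v i)"
    using w_eig sub_mult_vec_spike[OF spike] sub_inner_commute[of S v w]
    by (intro sub_inner_cong) (auto simp: \<beta>_def eq_diff_eq)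
  also have "\<dots> = lam * R"
    using rv rw R unfolding sub_inner_diff_scale_right sub_inner_scale[of S 1 _ lam, simplified] by simp
  finally have "(lam * R)^2 \<le> R * ((sub_opnorm S W)^2 * 1)"
    using sub_bilinear_le_opnorm[OF assms(1), of r W w] w_unit unfolding R_def by simp
  also have "\<dots> \<le> R * \<epsilon>^2"
    using sub_opnorm_nonneg[of S W] assms(3) sub_inner_self_nonneg[of S r] unfolding R_def
    by (intro mult_left_mono power_mono) auto
  finally have "R * (lam^2 * R) \<le> R * \<epsilon>^2"
    by (simp add: power2_eq_square mult_ac)
  then have "lam^2 * R \<le> \<epsilon>^2"
    using sub_inner_self_nonneg[of S r] unfolding R_def
    by (cases "sub_inner S r r = 0") auto
  then show ?thesis
    unfolding R \<beta>_def s_def .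
qed

lemma spiked_top_eigvec_alignment:
  assumes "finite S" and sym: "\<forall>i\<in>S. \<forall>j\<in>S. A i j = A j i"
    and spike: "\<forall>i\<in>S. \<forall>j\<in>S. A i j = W i j + \<theta> * v i * v j"
    and W_small: "sub_opnorm S W \<le> \<epsilon>" and "\<theta> > 0" and "\<gamma> > 0" and "\<gamma> \<le> sub_inner S v v"
    and "top_eigvec_sub S A w"
  shows "\<gamma> - 4 * \<epsilon>^2 / (\<theta>^2 * \<gamma>) \<le> (sub_inner S w v)^2"
proof -
  obtain lam where w_unit: "sub_inner S w w = 1" and w_eig: "\<forall>i\<in>S. sub_mult_vec S A w i = lam * w i"
    and rayleigh: "\<forall>y. sub_inner S y (sub_mult_vec S A y) \<le> lam * sub_inner S y y"
    using top_eigvec_sub_rayleigh[OF assms(1) sym assms(8)] by blast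
  define s where "s = sub_inner S v v"
  define \<beta> where "\<beta> = sub_inner S w v"
  have "s > 0" "\<gamma> \<le> s"
    using assms(6,7) unfolding s_def by auto
  have tail_le: "4 * \<epsilon>^2 / (\<theta>^2 * s) \<le> 4 * \<epsilon>^2 / (\<theta>^2 * \<gamma>)"
    using \<open>\<gamma> \<le> s\<close> assms(5,6) by (intro divide_left_mono mult_left_mono mult_pos_pos) auto
  show ?thesis
  proof (cases "\<theta> * \<gamma> \<le> 2 * \<epsilon>")
    case True
    then have "(\<theta> * \<gamma>)^2 \<le> (2 * \<epsilon>)^2"
      using assms(5,6) by (intro power_mono) auto
    then have "\<gamma> \<le> 4 * \<epsilon>^2 / (\<theta>^2 * \<gamma>)"
      using assms(5,6) by (simp add: field_simps power2_eq_square)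
    then show ?thesis
      using zero_le_power2[of "sub_inner S w v"] by linarith
  next
    case False
    have "s * (\<theta> * s - \<epsilon>) \<le> s * lam"
      using spiked_rayleigh_lower[OF assms(1) spike W_small rayleigh] unfolding s_def
      by (simp add: algebra_simps power2_eq_square)
    moreover have "\<theta> * \<gamma> \<le> \<theta> * s"
      using \<open>\<gamma> \<le> s\<close> assms(5) by simp
    ultimately have "\<theta> * s / 2 \<le> lam"
      using \<open>s > 0\<close> False by simp
    then have lam_sq: "(\<theta> * s / 2)^2 \<le> lam^2"
      using \<open>s > 0\<close> assms(5) by (intro power_mono) auto
    have res: "lam^2 * (1 - \<beta>^2 / s) \<le> \<epsilon>^2"
      using spiked_eigvec_residual[OF assms(1) spike W_small w_unit w_eig] \<open>s > 0\<close>
      unfolding s_def \<beta>_def by blast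
    show ?thesis
    proof (cases "1 - \<beta>^2 / s \<le> 0")
      case True
      then have "s \<le> \<beta>^2"
        using \<open>s > 0\<close> by (simp add: field_simps)
      moreover have "0 \<le> 4 * \<epsilon>^2 / (\<theta>^2 * \<gamma>)"
        using assms(5,6) by simp
      ultimately show ?thesis
        using \<open>\<gamma> \<le> s\<close> unfolding \<beta>_def by linarith
    next
      case False
      then have "(\<theta> * s / 2)^2 * (1 - \<beta>^2 / s) \<le> lam^2 * (1 - \<beta>^2 / s)"
        using lam_sq by (intro mult_right_mono) auto
      with res have "(\<theta> * s / 2)^2 * (1 - \<beta>^2 / s) \<le> \<epsilon>^2"
        by linarith
      then have "s * (s - 4 * \<epsilon>^2 / (\<theta>^2 * s)) \<le> s * \<beta>^2"
        using \<open>s > 0\<close> assms(5) by (simp add: field_simps power2_eq_square)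
      then have "s - 4 * \<epsilon>^2 / (\<theta>^2 * s) \<le> \<beta>^2"
        using \<open>s > 0\<close> by simp
      then show ?thesis
        using tail_le \<open>\<gamma> \<le> s\<close> unfolding \<beta>_def by linarith
    qed
  qed
qed

lemma sqrt_mult_pos_part_le_abs:
  fixes \<gamma> E \<beta> :: real
  assumes "0 < \<gamma>" and "\<gamma> * (1 - E) \<le> \<beta>^2"
  shows "sqrt \<gamma> * sqrt (max (1 - E) 0) \<le> \<bar>\<beta>\<bar>"
proof -
  have "\<gamma> * max (1 - E) 0 \<le> \<beta>^2"
    using assms by (cases "E \<le> 1") (auto simp: max_def)
  then have "sqrt (\<gamma> * max (1 - E) 0) \<le> sqrt (\<beta>^2)"
    by (rule real_sqrt_le_mono)
  then show ?thesis
    by (simp add: real_sqrt_mult)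
qed

lemma half_mult_le_sqrt_mult_pos_part:
  fixes \<gamma> E :: real
  assumes "0 < \<gamma>" and "\<gamma> < 1" and "E \<le> 1/2"
  shows "1/2 * \<gamma> \<le> sqrt \<gamma> * sqrt (max (1 - E) 0)"
proof -
  have "sqrt \<gamma> * sqrt \<gamma> \<le> sqrt \<gamma>"
    using assms(1,2) by (intro mult_left_le) auto
  then have "\<gamma> \<le> sqrt \<gamma>"
    using assms(1) by simp
  moreover have "1/2 \<le> sqrt (max (1 - E) 0)"
  proof -
    have "(1/2::real) \<le> sqrt (1/2)"
      by (rule real_le_rsqrt) (simp add: power2_eq_square)
    also have "\<dots> \<le> sqrt (max (1 - E) 0)"
      using assms(3) by simp
    finally show ?thesis .
  qed
  ultimately have "\<gamma> * (1/2) \<le> sqrt \<gamma> * sqrt (max (1 - E) 0)"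
    using assms(1) by (intro mult_mono) auto
  then show ?thesis
    by (simp add: mult.commute)
qed

lemma Gamma_hat_symmetric: "Gamma_hat m x i j = Gamma_hat m x j i"
  unfolding Gamma_hat_def by (simp add: mult.commute)

lemma Gamma_hat_top_eigvec_alignment:
  fixes \<theta> \<gamma> C0 :: real and v w :: "nat \<Rightarrow> real"
  assumes "n \<ge> 2" and "\<theta> > 0" and "0 < \<gamma>" and "\<gamma> < 1"
    and noise: "\<forall>T. T \<subseteq> {..<n} \<longrightarrow> T \<noteq> {} \<longrightarrow>
      sub_opnorm T (\<lambda>i j. Gamma_hat m x i j - \<theta> * v i * v j)
        \<le> C0 * (1 + \<theta>) * sqrt (real (card T) * ln (real n) / real m)"
    and "S \<subseteq> {..<n}" and "card S = k" and "sqrt (\<Sum>i\<in>S. (v i)^2) \<ge> sqrt \<gamma>"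
    and top: "top_eigvec_sub S (Gamma_hat m x) w"
  defines "E \<equiv> 4 * C0^2 * (1 + \<theta>)^2 / (\<theta>^2 * \<gamma>^2) * (real k * ln (real n) / real m)"
  shows "sqrt \<gamma> * sqrt (max (1 - E) 0) \<le> \<bar>\<Sum>i<n. w i * v i\<bar>"
    and "real m \<ge> 8 * C0^2 * (1 + \<theta>)^2 / (\<theta>^2 * \<gamma>^2) * real k * ln (real n) \<Longrightarrow>
      1/2 * \<gamma> \<le> \<bar>\<Sum>i<n. w i * v i\<bar>"
proof -
  define D where "D = real k * ln (real n) / real m"
  define \<epsilon> where "\<epsilon> = C0 * (1 + \<theta>) * sqrt D"
  have "finite S"
    using assms(6) finite_subset by blast
  moreover have "S \<noteq> {}"
    using top unfolding top_eigvec_sub_def by auto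
  ultimately have W_small: "sub_opnorm S (\<lambda>i j. Gamma_hat m x i j - \<theta> * v i * v j) \<le> \<epsilon>"
    using noise assms(6,7) unfolding \<epsilon>_def D_def by auto
  have "\<gamma> \<le> sub_inner S v v"
    using assms(8) by (simp add: sub_inner_def power2_eq_square)
  then have "\<gamma> - 4 * \<epsilon>^2 / (\<theta>^2 * \<gamma>) \<le> (sub_inner S w v)^2"
    using spiked_top_eigvec_alignment[OF \<open>finite S\<close> _ _ W_small assms(2,3) _ top] Gamma_hat_symmetric
    by simp
  moreover have "\<gamma> - 4 * \<epsilon>^2 / (\<theta>^2 * \<gamma>) = \<gamma> * (1 - E)"
  proof -
    have "D \<ge> 0"
      using assms(1) unfolding D_def by simp
    then show ?thesis
      using assms(2,3) unfolding E_def \<epsilon>_def D_def[symmetric]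
      by (simp add: field_simps power_mult_distrib power2_eq_square)
  qed
  moreover have "(\<Sum>i<n. w i * v i) = sub_inner S w v"
    using top assms(6) unfolding top_eigvec_sub_def sub_inner_def by (intro sum.mono_neutral_right) auto
  ultimately show "sqrt \<gamma> * sqrt (max (1 - E) 0) \<le> \<bar>\<Sum>i<n. w i * v i\<bar>"
    using sqrt_mult_pos_part_le_abs[OF assms(3)] by simp
  moreover assume "real m \<ge> 8 * C0^2 * (1 + \<theta>)^2 / (\<theta>^2 * \<gamma>^2) * real k * ln (real n)"
  then have "E \<le> 1/2"
    using assms(2,3) unfolding E_def by (cases "m = 0") (simp_all add: field_simps)
  ultimately show "1/2 * \<gamma> \<le> \<bar>\<Sum>i<n. w i * v i\<bar>"
    using half_mult_le_sqrt_mult_pos_part[OF assms(3,4)] by fastforce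
qed

theorem proposition5:
  fixes C0 :: real
  assumes "C0 > 0"
  shows "\<exists>C1>0. \<exists>C>0. \<exists>c0. 0 < c0 \<and> c0 \<le> 1/2 \<and>
    (\<forall>(n::nat) (m::nat) (\<theta>::real) (k::nat) (v::nat \<Rightarrow> real) (x::nat \<Rightarrow> nat \<Rightarrow> real)
       (\<gamma>::real) (S::nat set) (w::nat \<Rightarrow> real).
      n \<ge> 2 \<longrightarrow> m \<ge> 1 \<longrightarrow> \<theta> > 0 \<longrightarrow> 1 \<le> k \<longrightarrow> k \<le> n \<longrightarrow>
      (\<forall>i\<ge>n. v i = 0) \<longrightarrow> (\<Sum>i<n. (v i)^2) = 1 \<longrightarrow> card {i. i < n \<and> v i \<noteq> 0} \<le> k \<longrightarrow>
      (\<forall>T. T \<subseteq> {..<n} \<longrightarrow> T \<noteq> {} \<longrightarrow>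
         sub_opnorm T (\<lambda>i j. Gamma_hat m x i j - \<theta> * v i * v j)
           \<le> C0 * (1 + \<theta>) * sqrt (real (card T) * ln (real n) / real m)) \<longrightarrow>
      0 < \<gamma> \<longrightarrow> \<gamma> < 1 \<longrightarrow>
      S \<subseteq> {..<n} \<longrightarrow> card S = k \<longrightarrow> sqrt (\<Sum>i\<in>S. (v i)^2) \<ge> sqrt \<gamma> \<longrightarrow>
      top_eigvec_sub S (Gamma_hat m x) w \<longrightarrow>
      (\<bar>\<Sum>i<n. w i * v i\<bar> \<ge> sqrt \<gamma> * sqrt (max (1 - C1 * (1 + \<theta>)^2 / (\<theta>^2 * \<gamma>^2)
                                                * (real k * ln (real n) / real m)) 0)
       \<and> (real m \<ge> C * (1 + \<theta>)^2 / (\<theta>^2 * \<gamma>^2) * real k * ln (real n)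
            \<longrightarrow> \<bar>\<Sum>i<n. w i * v i\<bar> \<ge> c0 * \<gamma>)))"
proof (rule exI[of _ "4 * C0^2"], rule conjI, use assms in simp,
    rule exI[of _ "8 * C0^2"], rule conjI, use assms in simp,
    rule exI[of _ "1/2"], intro conjI allI impI)
qed (simp, simp, (rule Gamma_hat_top_eigvec_alignment; assumption)+)

end
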